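(* Let $R$ be a commutative ring, $n\ge2$, and $\varepsilon\in{\rm E}_{2n}(R)$. Then there exists $\rho\in{\rm E}_{\psi_n}(R)$ such that $(1\perp\rho)\,\varepsilon\in{\rm ESp}_{2n}(R)$.
   Context: All rings are commutative with identity. ${\rm E}_m(R)$ is the subgroup of ${\rm SL}_m(R)$ generated by $E_{ij}(\lambda)=I_m+\lambda e_{ij}$ ($i\neq j$). $\psi_n=\sum_{i=1}^n e_{2i-1,2i}-\sum_{i=1}^n e_{2i,2i-1}$. $1\perp\rho$ denotes $\begin{pmatrix}1&0\\0&\rho\end{pmatrix}$. Let $\sigma$ be the permutation with $\sigma(2i)=2i-1$, $\sigma(2i-1)=2i$. For $z\in R$, $1\le i\ne j\le 2n$, set $se_{ij}(z)=I_{2n}+ze_{ij}$ if $i=\sigma(j)$, and $se_{ij}(z)=I_{2n}+ze_{ij}-(-1)^{i+j}ze_{\sigma(j)\sigma(i)}$ if $i\ne\sigma(j)$. ${\rm ESp}_{2n}(R)$ is the subgroup of ${\rm GL}_{2n}(R)$ generated by all $se_{ij}(z)$ (it is contained in $\{\alpha:\alpha^t\psi_n\alpha=\psi_n\}$). Elements of $R^m$ are row vectors, ${}^t$ is transpose. For an invertible alternating (of the form $\nu-\nu^t$) $2n\times2n$ matrix $\varphi$ write $\varphi=\begin{pmatrix}0&-c\\ c^t&\nu\end{pmatrix}$, $\varphi^{-1}=\begin{pmatrix}0&d\\ -d^t&\mu\end{pmatrix}$ with $c,d\in R^{2n-1}$, and set $\alpha_\varphi(v)=I_{2n-1}+d^tv\nu$,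 $\beta_\varphi(v)=I_{2n-1}+\mu v^tc$; ${\rm E}_\varphi(R)$ is the subgroup of ${\rm GL}_{2n-1}(R)$ generated by all $\alpha_\varphi(v),\beta_\varphi(v)$, $v\in R^{2n-1}$. *)

theory Defs
  imports "Jordan_Normal_Form.Matrix"
begin

text \<open>All index
  arguments below (i, j, sigma) use the paper's 1-based indices; entry (i,j) of the
  paper is entry (i-1,j-1) of the JNF matrix.\<close>

inductive_set gen_subgroup :: "nat \<Rightarrow> 'a::comm_ring_1 mat set \<Rightarrow> 'a mat set"
  for m :: nat and G :: "'a mat set" where
  gen_one: "1\<^sub>m m \<in> gen_subgroup m G"
| gen_gen: "g \<in> G \<Longrightarrow> g \<in> gen_subgroup m G"
| gen_mult: "A \<in> gen_subgroup m G \<Longrightarrow> B \<in> gen_subgroup m G \<Longrightarrow> A * B \<in> gen_subgroup m G"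
| gen_inv: "A \<in> gen_subgroup m G \<Longrightarrow> B \<in> carrier_mat m m \<Longrightarrow> A * B = 1\<^sub>m m
            \<Longrightarrow> B * A = 1\<^sub>m m \<Longrightarrow> B \<in> gen_subgroup m G"

definition unit_mat :: "nat \<Rightarrow> nat \<Rightarrow> nat \<Rightarrow> 'a::comm_ring_1 mat" where
  "unit_mat m i j = mat m m (\<lambda>(r, c). if r + 1 = i \<and> c + 1 = j then 1 else 0)"

definition elem_mat :: "nat \<Rightarrow> nat \<Rightarrow> nat \<Rightarrow> 'a::comm_ring_1 \<Rightarrow> 'a mat" where
  "elem_mat m i j l = 1\<^sub>m m + l \<cdot>\<^sub>m unit_mat m i j"

definition E_grp :: "nat \<Rightarrow> 'a::comm_ring_1 mat set" where
  "E_grp m = gen_subgroup m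
     {elem_mat m i j l | i j l. 1 \<le> i \<and> i \<le> m \<and> 1 \<le> j \<and> j \<le> m \<and> i \<noteq> j}"

definition psi :: "nat \<Rightarrow> 'a::comm_ring_1 mat" where
  "psi n = mat (2*n) (2*n) (\<lambda>(r, c).
      if odd (r + 1) \<and> c + 1 = r + 2 then 1
      else if even (r + 1) \<and> c + 2 = r + 1 then -1 else 0)"
  \<comment> \<open>paper indices: entry (2i-1,2i) = 1, entry (2i,2i-1) = -1, all else 0\<close>

definition sigma :: "nat \<Rightarrow> nat" where
  "sigma k = (if even k then k - 1 else k + 1)"

definition se :: "nat \<Rightarrow> nat \<Rightarrow> nat \<Rightarrow> 'a::comm_ring_1 \<Rightarrow> 'a mat" where
  "se n i j z = (if i = sigma j then 1\<^sub>m (2*n) + z \<cdot>\<^sub>m unit_mat (2*n) i j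
     else 1\<^sub>m (2*n) + z \<cdot>\<^sub>m unit_mat (2*n) i j
          - ((-1) ^ (i + j) * z) \<cdot>\<^sub>m unit_mat (2*n) (sigma j) (sigma i))"

definition ESp :: "nat \<Rightarrow> 'a::comm_ring_1 mat set" where
  "ESp n = gen_subgroup (2*n)
     {se n i j z | i j z. 1 \<le> i \<and> i \<le> 2*n \<and> 1 \<le> j \<and> j \<le> 2*n \<and> i \<noteq> j}"

definition mat_inv :: "'a::comm_ring_1 mat \<Rightarrow> 'a mat" where
  "mat_inv A = (THE B. B \<in> carrier_mat (dim_row A) (dim_row A)
                 \<and> A * B = 1\<^sub>m (dim_row A) \<and> B * A = 1\<^sub>m (dim_row A))"

text \<open>Block data of an invertible alternating matrix phi (size m = 2n):
  phi = [[0, -c], [c^t, nu]],  phi^{-1} = [[0, d], [-d^t, mu]].\<close>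
definition blk_c :: "'a::comm_ring_1 mat \<Rightarrow> 'a mat" where
  "blk_c phi = mat 1 (dim_row phi - 1) (\<lambda>(_, k). - (phi $$ (0, k + 1)))"
definition blk_nu :: "'a::comm_ring_1 mat \<Rightarrow> 'a mat" where
  "blk_nu phi = mat (dim_row phi - 1) (dim_row phi - 1) (\<lambda>(r, k). phi $$ (r + 1, k + 1))"
definition blk_d :: "'a::comm_ring_1 mat \<Rightarrow> 'a mat" where
  "blk_d phi = mat 1 (dim_row phi - 1) (\<lambda>(_, k). mat_inv phi $$ (0, k + 1))"
definition blk_mu :: "'a::comm_ring_1 mat \<Rightarrow> 'a mat" where
  "blk_mu phi = mat (dim_row phi - 1) (dim_row phi - 1) (\<lambda>(r, k). mat_inv phi $$ (r + 1, k + 1))"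

definition row_of :: "'a vec \<Rightarrow> 'a mat" where
  "row_of v = mat 1 (dim_vec v) (\<lambda>(_, k). v $ k)"

definition alpha_phi :: "'a::comm_ring_1 mat \<Rightarrow> 'a vec \<Rightarrow> 'a mat" where
  "alpha_phi phi v = 1\<^sub>m (dim_row phi - 1)
     + transpose_mat (blk_d phi) * row_of v * blk_nu phi"

definition beta_phi :: "'a::comm_ring_1 mat \<Rightarrow> 'a vec \<Rightarrow> 'a mat" where
  "beta_phi phi v = 1\<^sub>m (dim_row phi - 1)
     + blk_mu phi * transpose_mat (row_of v) * blk_c phi"

definition E_phi :: "'a::comm_ring_1 mat \<Rightarrow> 'a mat set" where
  "E_phi phi = gen_subgroup (dim_row phi - 1)
     ({alpha_phi phi v | v. dim_vec v = dim_row phi - 1}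
      \<union> {beta_phi phi v | v. dim_vec v = dim_row phi - 1})"

definition one_perp :: "'a::comm_ring_1 mat \<Rightarrow> 'a mat" where
  "one_perp rho = four_block_mat (1\<^sub>m 1) (0\<^sub>m 1 (dim_col rho)) (0\<^sub>m (dim_row rho) 1) rho"

end

theory Submission
  imports Defs
begin

text \<open>Let \<open>P = (1 \<perp> E\<^sub>\<psi>) ESp\<^sub>2\<^sub>n\<close>. Since \<open>I \<in> P\<close>, it suffices to show that \<open>P\<close> is stable under
  left multiplication by the generators \<open>E\<^sub>i\<^sub>j(\<lambda>)\<close>: then \<open>\<epsilon> = (1 \<perp> \<rho>) s\<close> and
  \<open>(1 \<perp> \<rho>\<^sup>-\<^sup>1) \<epsilon> = s\<close>. Conjugation by \<open>1 \<perp> \<rho>\<close> preserves first-row matrices \<open>I + e\<^sub>1 w\<close> and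
  first-column matrices \<open>I + w\<^sup>t e\<^sub>1\<close>, so it is enough that these lie in \<open>P\<close>. A product of
  generators \<open>se\<^sub>1\<^sub>j\<close> realises any first row \<open>w\<close> at the cost of an extra second column \<open>q\<close>,
  and \<open>I - q e\<^sub>2\<^sup>t\<close> is exactly \<open>1 \<perp> \<beta>\<^sub>\<psi>(v)\<close> for a suitable \<open>v\<close>; first columns are handled by
  transposing, with \<open>\<alpha>\<^sub>\<psi>\<close> in place of \<open>\<beta>\<^sub>\<psi>\<close>. Finally, for \<open>i, j \<ge> 2\<close>, \<open>E\<^sub>i\<^sub>j(\<lambda>)\<close> is the
  commutator of \<open>E\<^sub>i\<^sub>1(\<lambda>)\<close> and \<open>E\<^sub>1\<^sub>j(1)\<close>.\<close>

section \<open>Matrices and generated subgroups\<close>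

lemma index_mult_mat_sum:
  assumes "A \<in> carrier_mat N K" "B \<in> carrier_mat K M" "i < N" "j < M"
  shows "(A * B) $$ (i, j) = (\<Sum>k<K. A $$ (i, k) * B $$ (k, j))"
  using assms by (auto simp: scalar_prod_def atLeast0LessThan intro!: sum.cong)

lemma sum_mult_inverse_mat:
  fixes M :: "'a::comm_semiring_1 mat"
  assumes M: "M \<in> carrier_mat N N" and Mi: "Mi \<in> carrier_mat N N" and MMi: "M * Mi = 1\<^sub>m N"
    and r: "r < N"
  shows "(\<Sum>k<N. M $$ (r, k) * (\<Sum>j<N. Mi $$ (k, j) * p j)) = p r"
proof -
  have "(\<Sum>k<N. M $$ (r, k) * (\<Sum>j<N. Mi $$ (k, j) * p j)) = (\<Sum>k<N. \<Sum>j<N. M $$ (r, k) * Mi $$ (k, j) * p j)"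
    by (simp add: sum_distrib_left mult.assoc)
  also have "\<dots> = (\<Sum>j<N. \<Sum>k<N. M $$ (r, k) * Mi $$ (k, j) * p j)" by (rule sum.swap)
  also have "\<dots> = (\<Sum>j<N. (M * Mi) $$ (r, j) * p j)"
    by (rule sum.cong) (auto simp: index_mult_mat_sum[OF M Mi r] sum_distrib_right)
  also have "\<dots> = (\<Sum>j<N. if j = r then p j else 0)"
    unfolding MMi by (rule sum.cong) (use r in auto)
  also have "\<dots> = p r" using r by simp
  finally show ?thesis .
qed

lemma mat_eq_carrierI:
  assumes "A \<in> carrier_mat N N" "B \<in> carrier_mat N N"
    and "\<And>r c. r < N \<Longrightarrow> c < N \<Longrightarrow> A $$ (r, c) = B $$ (r, c)"
  shows "A = B"
  using assms by (intro eq_matI) auto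

lemma inverse_mat_mult:
  fixes A :: "'a::semiring_1 mat"
  assumes c: "A \<in> carrier_mat m m" "A' \<in> carrier_mat m m" "B \<in> carrier_mat m m" "B' \<in> carrier_mat m m"
    and inv: "A * A' = 1\<^sub>m m" "A' * A = 1\<^sub>m m" "B * B' = 1\<^sub>m m" "B' * B = 1\<^sub>m m"
  shows "A * B * (B' * A') = 1\<^sub>m m" and "B' * A' * (A * B) = 1\<^sub>m m"
proof -
  have "A * B * (B' * A') = A * (B * (B' * A'))"
    by (rule assoc_mult_mat[OF c(1,3) mult_carrier_mat[OF c(4,2)]])
  also have "B * (B' * A') = B * B' * A'" by (rule assoc_mult_mat[symmetric, OF c(3,4,2)])
  finally show "A * B * (B' * A') = 1\<^sub>m m" using c inv by simp
  have "B' * A' * (A * B) = B' * (A' * (A * B))"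
    by (rule assoc_mult_mat[OF c(4,2) mult_carrier_mat[OF c(1,3)]])
  also have "A' * (A * B) = A' * A * B" by (rule assoc_mult_mat[symmetric, OF c(2,1,3)])
  finally show "B' * A' * (A * B) = 1\<^sub>m m" using c inv by simp
qed

lemma inverse_mat_unique:
  fixes A :: "'a::semiring_1 mat"
  assumes c: "A \<in> carrier_mat m m" "B \<in> carrier_mat m m" "C \<in> carrier_mat m m"
    and inv: "A * B = 1\<^sub>m m" "C * A = 1\<^sub>m m"
  shows "C = B"
proof -
  have "C = C * (A * B)" using c inv by simp
  also have "\<dots> = (C * A) * B" by (rule assoc_mult_mat[symmetric, OF c(3,1,2)])
  finally show ?thesis using c inv by simp
qed

lemma gen_subgroup_carrier:
  assumes "G \<subseteq> carrier_mat m m"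
  shows "gen_subgroup m G \<subseteq> carrier_mat m m"
proof
  fix A assume "A \<in> gen_subgroup m G"
  then show "A \<in> carrier_mat m m"
    by induction (use assms in auto)
qed

lemma gen_subgroup_inverse:
  assumes G: "G \<subseteq> carrier_mat m m"
    and inv: "\<And>g. g \<in> G \<Longrightarrow> \<exists>h\<in>carrier_mat m m. g * h = 1\<^sub>m m \<and> h * g = 1\<^sub>m m"
    and A: "A \<in> gen_subgroup m G"
  shows "\<exists>B\<in>gen_subgroup m G. A * B = 1\<^sub>m m \<and> B * A = 1\<^sub>m m"
  using A
proof induction
  case gen_one
  then show ?case by (auto intro!: bexI[of _ "1\<^sub>m m"] gen_subgroup.gen_one)
next
  case (gen_gen g)
  then obtain h where h: "h \<in> carrier_mat m m" "g * h = 1\<^sub>m m" "h * g = 1\<^sub>m m"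
    using inv by blast
  then have "h \<in> gen_subgroup m G"
    by (intro gen_subgroup.gen_inv[OF gen_subgroup.gen_gen[OF gen_gen]])
  with h show ?case by blast
next
  case (gen_mult A B)
  then obtain A' B' where A': "A' \<in> gen_subgroup m G" "A * A' = 1\<^sub>m m" "A' * A = 1\<^sub>m m"
    and B': "B' \<in> gen_subgroup m G" "B * B' = 1\<^sub>m m" "B' * B = 1\<^sub>m m" by blast
  have "A \<in> carrier_mat m m" "B \<in> carrier_mat m m" "A' \<in> carrier_mat m m" "B' \<in> carrier_mat m m"
    using gen_mult A' B' gen_subgroup_carrier[OF G] by auto
  with A' B' show ?case
    by (intro bexI[of _ "B' * A'"] conjI inverse_mat_mult gen_subgroup.gen_mult) auto
next
  case (gen_inv A B)
  then show ?case by blast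
qed

lemma gen_subgroup_transpose:
  assumes G: "G \<subseteq> carrier_mat m m" and GT: "\<And>g. g \<in> G \<Longrightarrow> transpose_mat g \<in> G"
    and A: "A \<in> gen_subgroup m G"
  shows "transpose_mat A \<in> gen_subgroup m G"
  using A
proof induction
  case gen_one
  then show ?case by (simp add: gen_subgroup.gen_one)
next
  case (gen_gen g)
  then show ?case by (intro GT gen_subgroup.gen_gen)
next
  case (gen_mult A B)
  then have "A \<in> carrier_mat m m" "B \<in> carrier_mat m m"
    using gen_subgroup_carrier[OF G] by auto
  then have "transpose_mat (A * B) = transpose_mat B * transpose_mat A"
    by (rule transpose_mult)
  then show ?case by (simp add: gen_mult.IH gen_subgroup.gen_mult)
next
  case (gen_inv A B)
  then have c: "A \<in> carrier_mat m m" using gen_subgroup_carrier[OF G] by auto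
  have "transpose_mat A * transpose_mat B = transpose_mat (B * A)"
    using transpose_mult[OF gen_inv.hyps(2) c] by simp
  then have 1: "transpose_mat A * transpose_mat B = 1\<^sub>m m" using gen_inv.hyps(4) by simp
  have "transpose_mat B * transpose_mat A = transpose_mat (A * B)"
    using transpose_mult[OF c gen_inv.hyps(2)] by simp
  then have 2: "transpose_mat B * transpose_mat A = 1\<^sub>m m" using gen_inv.hyps(3) by simp
  show ?case
    using gen_inv.hyps(2) by (intro gen_subgroup.gen_inv[OF gen_inv.IH _ 1 2]) simp
qed

text \<open>The induction carries an inverse along, because the rule \<open>gen_inv\<close> adds elements that
  are not themselves products of generators.\<close>

lemma gen_subgroup_mult_stable:
  assumes G: "G \<subseteq> carrier_mat m m"
    and inv: "\<And>g. g \<in> G \<Longrightarrow> \<exists>h\<in>G. g * h = 1\<^sub>m m \<and> h * g = 1\<^sub>m m"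
    and P: "P \<subseteq> carrier_mat m m"
    and stable: "\<And>g X. g \<in> G \<Longrightarrow> X \<in> P \<Longrightarrow> g * X \<in> P"
    and A: "A \<in> gen_subgroup m G" and X: "X \<in> P"
  shows "A * X \<in> P"
proof -
  let ?stable = "\<lambda>A. \<forall>X\<in>P. A * X \<in> P"
  have "\<exists>B\<in>carrier_mat m m. A * B = 1\<^sub>m m \<and> B * A = 1\<^sub>m m \<and> ?stable A \<and> ?stable B"
    using A
  proof induction
    case gen_one
    have "?stable (1\<^sub>m m)" using P by auto
    then show ?case by (intro bexI[of _ "1\<^sub>m m"]) auto
  next
    case (gen_gen g)
    then obtain h where "h \<in> G" "g * h = 1\<^sub>m m" "h * g = 1\<^sub>m m" using inv by blast
    with gen_gen G show ?case by (intro bexI[of _ h]) (auto intro: stable)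
  next
    case (gen_mult A B)
    then obtain A' B' where A': "A' \<in> carrier_mat m m" "A * A' = 1\<^sub>m m" "A' * A = 1\<^sub>m m"
        "?stable A" "?stable A'"
      and B': "B' \<in> carrier_mat m m" "B * B' = 1\<^sub>m m" "B' * B = 1\<^sub>m m" "?stable B" "?stable B'"
      by blast
    have c: "A \<in> carrier_mat m m" "B \<in> carrier_mat m m"
      using gen_mult gen_subgroup_carrier[OF G] by auto
    have "?stable (A * B)"
    proof
      fix X assume X: "X \<in> P"
      then have "A * B * X = A * (B * X)" using c P by (intro assoc_mult_mat) auto
      with X A'(4) B'(4) show "A * B * X \<in> P" by simp
    qed
    moreover have "?stable (B' * A')"
    proof
      fix X assume X: "X \<in> P"
      then have "B' * A' * X = B' * (A' * X)" using A' B' P by (intro assoc_mult_mat) auto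
      with X A'(5) B'(5) show "B' * A' * X \<in> P" by simp
    qed
    moreover note inverse_mat_mult[OF c(1) A'(1) c(2) B'(1) A'(2,3) B'(2,3)]
    ultimately show ?case using mult_carrier_mat[OF B'(1) A'(1)] by blast
  next
    case (gen_inv A B)
    then obtain A' where A': "A' \<in> carrier_mat m m" "A * A' = 1\<^sub>m m" "A' * A = 1\<^sub>m m"
        "?stable A" "?stable A'" by blast
    have "A \<in> carrier_mat m m" using gen_inv.hyps(1) gen_subgroup_carrier[OF G] by blast
    then have "B = A'" using inverse_mat_unique[OF _ A'(1) gen_inv.hyps(2) A'(2) gen_inv.hyps(4)] by blast
    with A' \<open>A \<in> carrier_mat m m\<close> gen_inv.hyps(3,4) show ?case by blast
  qed
  with X show ?thesis by blast
qed


section \<open>Elementary and elementary symplectic matrices\<close>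

lemma elem_mat_carrier [simp]: "elem_mat m i j l \<in> carrier_mat m m"
  unfolding elem_mat_def unit_mat_def by simp

lemma index_elem_mat:
  "r < m \<Longrightarrow> c < m \<Longrightarrow>
    elem_mat m i j l $$ (r, c) = (if r = c then 1 else 0) + (if r + 1 = i \<and> c + 1 = j then l else 0)"
  unfolding elem_mat_def unit_mat_def by simp

lemma E_grp_carrier: "A \<in> E_grp m \<Longrightarrow> A \<in> carrier_mat m m"
  unfolding E_grp_def by (erule subsetD[OF gen_subgroup_carrier, rotated]) auto

lemma elem_mat_inverse:
  assumes "i \<noteq> j"
  shows "elem_mat m i j l * elem_mat m i j (- l) = 1\<^sub>m m"
proof (rule mat_eq_carrierI[OF mult_carrier_mat[OF elem_mat_carrier elem_mat_carrier] one_carrier_mat])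
  fix r c assume r: "r < m" and c: "c < m"
  have "(elem_mat m i j l * elem_mat m i j (- l)) $$ (r, c)
      = (\<Sum>k<m. elem_mat m i j l $$ (r, k) * elem_mat m i j (- l) $$ (k, c))"
    by (rule index_mult_mat_sum[OF elem_mat_carrier elem_mat_carrier r c])
  also have "\<dots> = (\<Sum>k<m. ((if r = k then 1 else 0) + (if r + 1 = i \<and> k + 1 = j then l else 0))
      * ((if k = c then 1 else 0) + (if k + 1 = i \<and> c + 1 = j then - l else 0)))"
    by (rule sum.cong) (use r c in \<open>auto simp: index_elem_mat\<close>)
  also have "\<dots> = (\<Sum>k<m. (if k = r then (if k = c then 1 else 0) + (if k + 1 = i \<and> c + 1 = j then - l else 0) else 0)
      + (if k = c then (if r + 1 = i \<and> c + 1 = j then l else 0) else 0))"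
    by (rule sum.cong) (use assms in \<open>auto simp: algebra_simps\<close>)
  also have "\<dots> = 1\<^sub>m m $$ (r, c)"
    using r c by (auto simp: sum.distrib)
  finally show "(elem_mat m i j l * elem_mat m i j (- l)) $$ (r, c) = 1\<^sub>m m $$ (r, c)" .
qed

text \<open>In the paper's indexing \<open>row_col_mat N p q = I + e\<^sub>1 p + q e\<^sub>2\<^sup>t\<close>; products of the
  generators \<open>se n 1 j\<close> stay in this family.\<close>

definition row_col_mat :: "nat \<Rightarrow> (nat \<Rightarrow> 'a::comm_ring_1) \<Rightarrow> (nat \<Rightarrow> 'a) \<Rightarrow> 'a mat" where
  "row_col_mat N p q = mat N N (\<lambda>(r, c).
     (if r = c then 1 else 0) + (if r = 0 then p c else 0) + (if c = 1 then q r else 0))"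

lemma row_col_mat_carrier [simp]: "row_col_mat N p q \<in> carrier_mat N N"
  by (simp add: row_col_mat_def)

lemma dim_row_col_mat [simp]:
  "dim_row (row_col_mat N p q) = N" "dim_col (row_col_mat N p q) = N"
  by (simp_all add: row_col_mat_def)

lemma index_row_col_mat [simp]:
  "r < N \<Longrightarrow> c < N \<Longrightarrow> row_col_mat N p q $$ (r, c) =
     (if r = c then 1 else 0) + (if r = 0 then p c else 0) + (if c = 1 then q r else 0)"
  by (simp add: row_col_mat_def)

lemma row_col_mat_cong:
  "(\<And>c. c < N \<Longrightarrow> p c = p' c) \<Longrightarrow> (\<And>r. r < N \<Longrightarrow> q r = q' r) \<Longrightarrow>
    row_col_mat N p q = row_col_mat N p' q'"
  by (rule mat_eq_carrierI) auto

lemma row_col_mat_zero: "row_col_mat N (\<lambda>_. 0) (\<lambda>_. 0) = 1\<^sub>m N"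
  by (rule mat_eq_carrierI) auto

lemma row_col_mat_mult:
  assumes "p 0 = 0" "q' 1 = 0"
  shows "row_col_mat N p q * row_col_mat N p' q' =
    row_col_mat N (\<lambda>c. p c + p' c + (if c = 1 then (\<Sum>k<N. p k * q' k) else 0)) (\<lambda>r. q r + q' r)"
proof (rule mat_eq_carrierI[OF mult_carrier_mat[OF row_col_mat_carrier row_col_mat_carrier] row_col_mat_carrier])
  fix r c assume r: "r < N" and c: "c < N"
  have "(row_col_mat N p q * row_col_mat N p' q') $$ (r, c)
      = (\<Sum>k<N. row_col_mat N p q $$ (r, k) * row_col_mat N p' q' $$ (k, c))"
    by (rule index_mult_mat_sum[OF row_col_mat_carrier row_col_mat_carrier r c])
  also have "\<dots> = (\<Sum>k<N. ((if r = k then 1 else 0) + (if r = 0 then p k else 0) + (if k = 1 then q r else 0)) *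
       ((if k = c then 1 else 0) + (if k = 0 then p' c else 0) + (if c = 1 then q' k else 0)))"
    by (rule sum.cong) (auto simp: r c)
  also have "\<dots> = (if r = c then 1 else 0)
      + (if r = 0 then p c + p' c + (if c = 1 then (\<Sum>k<N. p k * q' k) else 0) else 0)
      + (if c = 1 then q r + q' r else 0)"
    using r c assms
    by (simp add: algebra_simps sum.distrib if_distrib[where f="\<lambda>x. x * _"]
        if_distrib[where f="\<lambda>x. _ * x"] sum.delta sum.delta' cong: if_cong)
  finally show "(row_col_mat N p q * row_col_mat N p' q') $$ (r, c) =
      row_col_mat N (\<lambda>c. p c + p' c + (if c = 1 then (\<Sum>k<N. p k * q' k) else 0)) (\<lambda>r. q r + q' r) $$ (r, c)"
    using r c by simp
qed

lemma sigma_sigma [simp]: "sigma (sigma k) = k"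
  unfolding sigma_def by (cases k) auto

lemma sigma_one_two [simp]: "sigma 1 = 2" "sigma (Suc 0) = 2" "sigma 2 = 1" "sigma (Suc (Suc 0)) = 1"
  by (auto simp: sigma_def)

lemma sigma_ge_3: "3 \<le> j \<Longrightarrow> 3 \<le> sigma j"
  unfolding sigma_def by (cases "j = 3") auto

lemma se_carrier [simp]: "se n i j z \<in> carrier_mat (2*n) (2*n)"
  unfolding se_def carrier_mat_def unit_mat_def by simp

lemma dim_se [simp]: "dim_row (se n i j z) = 2*n" "dim_col (se n i j z) = 2*n"
  using se_carrier by blast+

lemma index_se:
  assumes "r < 2*n" "c < 2*n"
  shows "se n i j z $$ (r, c) = (if r = c then 1 else 0) + (if r + 1 = i \<and> c + 1 = j then z else 0)
     - (if i = sigma j then 0 else if r + 1 = sigma j \<and> c + 1 = sigma i then (-1)^(i+j) * z else 0)"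
  using assms unfolding se_def unit_mat_def by simp

lemma se_transpose: "transpose_mat (se n i j z) = se n j i z"
proof (rule mat_eq_carrierI[of _ "2*n"])
  fix r c assume rc: "r < 2*n" "c < 2*n"
  have ij: "(i = sigma j) = (j = sigma i)" by auto
  have "transpose_mat (se n i j z) $$ (r, c) = se n i j z $$ (c, r)" using rc by simp
  also have "\<dots> = (if c = r then 1 else 0) + (if c + 1 = i \<and> r + 1 = j then z else 0)
     - (if i = sigma j then 0 else if c + 1 = sigma j \<and> r + 1 = sigma i then (-1)^(i+j) * z else 0)"
    by (rule index_se[OF rc(2) rc(1)])
  also have "\<dots> = (if r = c then 1 else 0) + (if r + 1 = j \<and> c + 1 = i then z else 0)
     - (if j = sigma i then 0 else if r + 1 = sigma i \<and> c + 1 = sigma j then (-1)^(j+i) * z else 0)"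
    unfolding ij by (simp only: add.commute[of i j] conj_commute eq_commute[of c r])
  also have "\<dots> = se n j i z $$ (r, c)" by (rule index_se[OF rc, symmetric])
  finally show "transpose_mat (se n i j z) $$ (r, c) = se n j i z $$ (r, c)" .
qed simp_all

lemma ESp_carrier: "A \<in> ESp n \<Longrightarrow> A \<in> carrier_mat (2*n) (2*n)"
  unfolding ESp_def by (erule subsetD[OF gen_subgroup_carrier, rotated]) auto

lemma ESp_transpose: "A \<in> ESp n \<Longrightarrow> transpose_mat A \<in> ESp n"
  unfolding ESp_def
proof (erule gen_subgroup_transpose[rotated 2])
  fix g assume "g \<in> {se n i j z |i j z. 1 \<le> i \<and> i \<le> 2*n \<and> 1 \<le> j \<and> j \<le> 2*n \<and> i \<noteq> j}"
  then obtain i j z where "g = se n i j z" "1 \<le> i" "i \<le> 2*n" "1 \<le> j" "j \<le> 2*n" "i \<noteq> j"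
    by blast
  moreover from this have "transpose_mat g = se n j i z" by (simp add: se_transpose)
  ultimately show "transpose_mat g \<in> {se n i j z |i j z. 1 \<le> i \<and> i \<le> 2*n \<and> 1 \<le> j \<and> j \<le> 2*n \<and> i \<noteq> j}"
    by blast
qed auto

lemma ESp_mult: "A \<in> ESp n \<Longrightarrow> B \<in> ESp n \<Longrightarrow> A * B \<in> ESp n"
  unfolding ESp_def by (rule gen_subgroup.gen_mult)

lemma ESp_one: "1\<^sub>m (2*n) \<in> ESp n"
  unfolding ESp_def by (rule gen_subgroup.gen_one)

lemma se_in_ESp: "1 \<le> i \<Longrightarrow> i \<le> 2*n \<Longrightarrow> 1 \<le> j \<Longrightarrow> j \<le> 2*n \<Longrightarrow> i \<noteq> j \<Longrightarrow> se n i j z \<in> ESp n"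
  unfolding ESp_def by (intro gen_subgroup.gen_gen) blast

lemma se_1_2_row_col: "se n 1 2 z = row_col_mat (2*n) (\<lambda>c. if c = 1 then z else 0) (\<lambda>_. 0)"
  by (rule mat_eq_carrierI[OF se_carrier row_col_mat_carrier]) (auto simp: index_se)

lemma se_1_j_row_col:
  assumes "3 \<le> j"
  shows "se n 1 j z = row_col_mat (2*n) (\<lambda>c. if c + 1 = j then z else 0)
           (\<lambda>r. if r + 1 = sigma j then - ((-1)^(1+j) * z) else 0)"
proof (rule mat_eq_carrierI[OF se_carrier row_col_mat_carrier])
  fix r c assume "r < 2*n" "c < 2*n"
  moreover have "1 \<noteq> sigma j" "j \<noteq> 1" using sigma_ge_3[OF assms] assms by auto
  ultimately show "se n 1 j z $$ (r, c) = row_col_mat (2*n) (\<lambda>c. if c + 1 = j then z else 0)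
      (\<lambda>r. if r + 1 = sigma j then - ((-1)^(1+j) * z) else 0) $$ (r, c)"
    by (auto simp: index_se)
qed

lemma ESp_row_col_mat_add_entry:
  assumes s: "row_col_mat (2*n) p q \<in> ESp n" and p0: "p 0 = 0" and c: "1 \<le> c" "c < 2*n"
  shows "\<exists>q'. q' 0 = 0 \<and> q' 1 = 0 \<and>
    row_col_mat (2*n) (\<lambda>k. p k + (if k = c then a else 0)) (\<lambda>r. q r + q' r) \<in> ESp n"
proof (cases "c = 1")
  case True
  have "row_col_mat (2*n) p q * se n 1 2 a = row_col_mat (2*n) (\<lambda>k. p k + (if k = c then a else 0)) (\<lambda>r. q r + 0)"
    unfolding se_1_2_row_col by (subst row_col_mat_mult) (use p0 True in \<open>auto intro!: row_col_mat_cong\<close>)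
  moreover have "se n 1 2 a \<in> ESp n" using c by (intro se_in_ESp) auto
  ultimately have "row_col_mat (2*n) (\<lambda>k. p k + (if k = c then a else 0)) (\<lambda>r. q r + 0) \<in> ESp n"
    using ESp_mult[OF s] by metis
  then show ?thesis by (intro exI[of _ "\<lambda>_. 0"]) simp
next
  case False
  text \<open>\<open>se n 1 (c+1) a\<close> also puts an entry into the second column (in row \<open>\<sigma>(c+1) \<ge> 3\<close>),
    which changes entry \<open>(1,2)\<close> of the product by \<open>S\<close>; \<open>se n 1 2 (-S)\<close> repairs it.\<close>
  define q' where "q' = (\<lambda>r. if r + 1 = sigma (c+1) then - ((-1)^(1+(c+1)) * a) else (0::'a))"
  define S where "S = (\<Sum>k<2*n. p k * q' k)"
  have "3 \<le> sigma (c+1)" using sigma_ge_3[of "c+1"] c False by auto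
  then have q'01: "q' 0 = 0" "q' 1 = 0" by (auto simp: q'_def)
  have se1: "se n 1 (c+1) a = row_col_mat (2*n) (\<lambda>k. if k + 1 = c + 1 then a else 0) q'"
    unfolding q'_def by (rule se_1_j_row_col) (use c False in auto)
  have "row_col_mat (2*n) p q * se n 1 (c+1) a
      = row_col_mat (2*n) (\<lambda>k. p k + (if k = c then a else 0) + (if k = 1 then S else 0)) (\<lambda>r. q r + q' r)"
    unfolding se1 S_def by (subst row_col_mat_mult) (use p0 q'01 in \<open>auto intro!: row_col_mat_cong\<close>)
  also have "\<dots> * se n 1 2 (- S) = row_col_mat (2*n) (\<lambda>k. p k + (if k = c then a else 0)) (\<lambda>r. q r + q' r)"
    unfolding se_1_2_row_col by (subst row_col_mat_mult) (use p0 c in \<open>auto intro!: row_col_mat_cong\<close>)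
  finally have e: "row_col_mat (2*n) p q * se n 1 (c+1) a * se n 1 2 (- S)
      = row_col_mat (2*n) (\<lambda>k. p k + (if k = c then a else 0)) (\<lambda>r. q r + q' r)" .
  have "se n 1 (c+1) a \<in> ESp n" "se n 1 2 (- S) \<in> ESp n"
    using c False by (intro se_in_ESp; simp)+
  then have "row_col_mat (2*n) (\<lambda>k. p k + (if k = c then a else 0)) (\<lambda>r. q r + q' r) \<in> ESp n"
    unfolding e[symmetric] by (intro ESp_mult s)
  with q'01 show ?thesis by blast
qed

lemma ESp_row_col_mat_exists:
  assumes p0: "p 0 = 0"
  shows "\<exists>q. q 0 = 0 \<and> q 1 = 0 \<and> row_col_mat (2*n) p q \<in> ESp n"
proof -
  have "\<exists>q. q 0 = 0 \<and> q 1 = 0 \<and> row_col_mat (2*n) (\<lambda>k. if k < N then p k else 0) q \<in> ESp n"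
    if "N \<le> 2*n" for N
    using that
  proof (induction N)
    case 0
    show ?case using ESp_one[of n] by (intro exI[of _ "\<lambda>_. 0"]) (simp add: row_col_mat_zero)
  next
    case (Suc N)
    then obtain q where q: "q 0 = 0" "q 1 = 0" "row_col_mat (2*n) (\<lambda>k. if k < N then p k else 0) q \<in> ESp n"
      by auto
    show ?case
    proof (cases "N = 0")
      case True
      have "row_col_mat (2*n) (\<lambda>k. if k < Suc N then p k else 0) q = row_col_mat (2*n) (\<lambda>k. if k < N then p k else 0) q"
        using True p0 by (intro row_col_mat_cong) auto
      with q show ?thesis by auto
    next
      case False
      then obtain q' where q': "q' 0 = 0" "q' 1 = 0"
        "row_col_mat (2*n) (\<lambda>k. (if k < N then p k else 0) + (if k = N then p N else 0)) (\<lambda>r. q r + q' r) \<in> ESp n"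
        using ESp_row_col_mat_add_entry[OF q(3) _ _ Suc.prems[THEN Suc_le_lessD], of "p N"] p0 by auto
      moreover have "row_col_mat (2*n) (\<lambda>k. (if k < N then p k else 0) + (if k = N then p N else 0)) (\<lambda>r. q r + q' r)
          = row_col_mat (2*n) (\<lambda>k. if k < Suc N then p k else 0) (\<lambda>r. q r + q' r)"
        by (intro row_col_mat_cong) auto
      ultimately show ?thesis using q by (intro exI[of _ "\<lambda>r. q r + q' r"]) auto
    qed
  qed
  from this[of "2*n"] obtain q where "q 0 = 0" "q 1 = 0"
    "row_col_mat (2*n) (\<lambda>k. if k < 2*n then p k else 0) q \<in> ESp n" by auto
  moreover have "row_col_mat (2*n) (\<lambda>k. if k < 2*n then p k else 0) q = row_col_mat (2*n) p q"
    by (rule row_col_mat_cong) auto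
  ultimately show ?thesis by auto
qed

section \<open>The standard alternating form \<open>\<psi>\<^sub>n\<close>\<close>

text \<open>0-based versions of \<open>\<sigma>\<close> and of the signs of \<open>\<psi>\<^sub>n\<close>: row \<open>r\<close> of \<open>\<psi>\<^sub>n\<close> has its only
  nonzero entry \<open>sg r\<close> in column \<open>tau r\<close>.\<close>

definition tau :: "nat \<Rightarrow> nat" where
  "tau r = (if even r then r + 1 else r - 1)"

definition sg :: "nat \<Rightarrow> 'a::comm_ring_1" where
  "sg r = (if even r then 1 else -1)"

lemma tau_tau [simp]: "tau (tau r) = r"
  unfolding tau_def by (cases r) auto

lemma sg_tau [simp]: "sg (tau r) = - sg r"
  unfolding tau_def sg_def by (cases r) auto

lemma sg_sq [simp]: "sg r * sg r = 1" "sg r * (sg r * x) = x" "sg r * x * sg r = x"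
  unfolding sg_def by auto

lemma tau_less: "r < 2*n \<Longrightarrow> tau r < 2*n"
  unfolding tau_def by (auto; presburger)

lemma tau_eq_iff: "(c = tau k) = (tau c = k)"
  by (metis tau_tau)

lemma tau_eq_0_iff: "(tau c = 0) = (c = 1)"
  unfolding tau_def by (cases c) (auto simp: odd_pos)

lemma tau_one [simp]: "tau 1 = 0" "tau (Suc 0) = 0"
  by (auto simp: tau_def)

lemma index_psi: "r < 2*n \<Longrightarrow> c < 2*n \<Longrightarrow> psi n $$ (r, c) = (if c = tau r then sg r else 0)"
  unfolding psi_def tau_def sg_def by (cases "even r") auto

lemma psi_carrier [simp]: "psi n \<in> carrier_mat (2*n) (2*n)"
  unfolding psi_def by simp

lemma dim_psi [simp]: "dim_row (psi n) = 2*n" "dim_col (psi n) = 2*n"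
  unfolding psi_def by simp_all

lemma psi_mult_psi: "psi n * psi n = - 1\<^sub>m (2*n)"
proof (rule mat_eq_carrierI[of _ "2*n"])
  fix r c assume rc: "r < 2*n" "c < 2*n"
  have "(psi n * psi n) $$ (r, c) = (\<Sum>k<2*n. psi n $$ (r, k) * psi n $$ (k, c))"
    by (rule index_mult_mat_sum[OF psi_carrier psi_carrier rc])
  also have "\<dots> = (\<Sum>k<2*n. if k = tau r then sg r * psi n $$ (tau r, c) else 0)"
    by (rule sum.cong) (use rc in \<open>auto simp: index_psi\<close>)
  also have "\<dots> = sg r * psi n $$ (tau r, c)" using tau_less[OF rc(1)] by simp
  also have "\<dots> = (if r = c then -1 else 0)"
    using rc tau_less[OF rc(1)] by (auto simp: index_psi tau_eq_iff)
  also have "\<dots> = (- 1\<^sub>m (2*n)) $$ (r, c)" using rc by simp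
  finally show "(psi n * psi n) $$ (r, c) = (- 1\<^sub>m (2*n)) $$ (r, c)" .
qed auto

lemma mat_inv_psi: "mat_inv (psi n) = - psi n"
proof -
  have "psi n * (- psi n) = - (psi n * psi n)" "(- psi n) * psi n = - (psi n * psi n)"
    by (rule uminus_mult_right_mat uminus_mult_left_mat; simp)+
  moreover have "- (- 1\<^sub>m (2*n)) = (1\<^sub>m (2*n) :: 'a mat)" by (rule eq_matI) auto
  ultimately have inv: "psi n * (- psi n) = 1\<^sub>m (2*n)" "(- psi n) * psi n = 1\<^sub>m (2*n)"
    by (simp_all add: psi_mult_psi)
  show ?thesis unfolding mat_inv_def dim_psi
  proof (rule the_equality)
    fix B assume "B \<in> carrier_mat (2*n) (2*n) \<and> psi n * B = 1\<^sub>m (2*n) \<and> B * psi n = 1\<^sub>m (2*n)"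
    then show "B = - psi n" using inverse_mat_unique[of "psi n" "2*n" "- psi n" B] inv(1) by auto
  qed (use inv in simp)
qed

lemma alpha_phi_psi:
  assumes n: "n \<ge> 1" and v: "dim_vec v = 2*n - 1"
  shows "alpha_phi (psi n) v = row_col_mat (2*n - 1) (\<lambda>c. - (\<Sum>k<2*n-1. v $ k * psi n $$ (k+1, c+1))) (\<lambda>_. 0)"
proof -
  let ?N = "2*n - 1"
  have cd: "transpose_mat (blk_d (psi n)) \<in> carrier_mat ?N 1" by (simp add: blk_d_def)
  have cR: "row_of v \<in> carrier_mat 1 ?N" using v by (simp add: row_of_def)
  have cnu: "blk_nu (psi n) \<in> carrier_mat ?N ?N" by (simp add: blk_nu_def)
  have cX: "transpose_mat (blk_d (psi n)) * row_of v \<in> carrier_mat ?N ?N" by (rule mult_carrier_mat[OF cd cR])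
  have cY: "transpose_mat (blk_d (psi n)) * row_of v * blk_nu (psi n) \<in> carrier_mat ?N ?N"
    by (rule mult_carrier_mat[OF cX cnu])
  show ?thesis unfolding alpha_phi_def dim_psi
  proof (rule mat_eq_carrierI[of _ ?N])
    fix r c assume rc: "r < ?N" "c < ?N"
    have X: "(transpose_mat (blk_d (psi n)) * row_of v) $$ (r, k) = (if r = 0 then - v $ k else 0)"
      if k: "k < ?N" for k
    proof -
      have "(transpose_mat (blk_d (psi n)) * row_of v) $$ (r, k)
          = (\<Sum>a<1. transpose_mat (blk_d (psi n)) $$ (r, a) * row_of v $$ (a, k))"
        by (rule index_mult_mat_sum[OF cd cR rc(1) k])
      also have "\<dots> = blk_d (psi n) $$ (0, r) * v $ k" using rc k v by (simp add: blk_d_def row_of_def)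
      also have "\<dots> = (if r = 0 then - v $ k else 0)" using rc k n
        by (simp add: blk_d_def mat_inv_psi index_psi tau_def sg_def)
      finally show ?thesis .
    qed
    have "(transpose_mat (blk_d (psi n)) * row_of v * blk_nu (psi n)) $$ (r, c)
       = (\<Sum>k<?N. (transpose_mat (blk_d (psi n)) * row_of v) $$ (r, k) * blk_nu (psi n) $$ (k, c))"
      by (rule index_mult_mat_sum[OF cX cnu rc])
    also have "\<dots> = (\<Sum>k<?N. (if r = 0 then - (v $ k * psi n $$ (k+1, c+1)) else 0))"
      by (rule sum.cong) (use rc in \<open>auto simp: X blk_nu_def\<close>)
    also have "\<dots> = (if r = 0 then - (\<Sum>k<?N. v $ k * psi n $$ (k+1, c+1)) else 0)"
      by (simp add: sum_negf)
    finally show "(1\<^sub>m ?N + transpose_mat (blk_d (psi n)) * row_of v * blk_nu (psi n)) $$ (r, c) =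
        row_col_mat ?N (\<lambda>c. - (\<Sum>k<?N. v $ k * psi n $$ (k + 1, c + 1))) (\<lambda>_. 0) $$ (r, c)"
      using rc carrier_matD[OF cY] by simp
  qed (use cY in simp_all)
qed

lemma beta_phi_psi:
  assumes n: "n \<ge> 1" and v: "dim_vec v = 2*n - 1"
  shows "beta_phi (psi n) v =
    transpose_mat (row_col_mat (2*n - 1) (\<lambda>r. \<Sum>k<2*n-1. psi n $$ (r+1, k+1) * v $ k) (\<lambda>_. 0))"
proof -
  let ?N = "2*n - 1"
  have cmu: "blk_mu (psi n) \<in> carrier_mat ?N ?N" by (simp add: blk_mu_def)
  have cR: "transpose_mat (row_of v) \<in> carrier_mat ?N 1" using v by (simp add: row_of_def)
  have cc: "blk_c (psi n) \<in> carrier_mat 1 ?N" by (simp add: blk_c_def)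
  have cX: "blk_mu (psi n) * transpose_mat (row_of v) \<in> carrier_mat ?N 1" by (rule mult_carrier_mat[OF cmu cR])
  have cY: "blk_mu (psi n) * transpose_mat (row_of v) * blk_c (psi n) \<in> carrier_mat ?N ?N"
    by (rule mult_carrier_mat[OF cX cc])
  show ?thesis unfolding beta_phi_def dim_psi
  proof (rule mat_eq_carrierI[of _ ?N])
    fix r c assume rc: "r < ?N" "c < ?N"
    have X: "(blk_mu (psi n) * transpose_mat (row_of v)) $$ (r, 0) = - (\<Sum>k<?N. psi n $$ (r+1, k+1) * v $ k)"
    proof -
      have "(blk_mu (psi n) * transpose_mat (row_of v)) $$ (r, 0)
          = (\<Sum>k<?N. blk_mu (psi n) $$ (r, k) * transpose_mat (row_of v) $$ (k, 0))"
        by (rule index_mult_mat_sum[OF cmu cR rc(1)]) simp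
      also have "\<dots> = (\<Sum>k<?N. - (psi n $$ (r+1, k+1) * v $ k))"
        by (rule sum.cong) (use rc v n in \<open>auto simp: blk_mu_def row_of_def mat_inv_psi\<close>)
      finally show ?thesis by (simp add: sum_negf)
    qed
    have "(blk_mu (psi n) * transpose_mat (row_of v) * blk_c (psi n)) $$ (r, c)
       = (\<Sum>a<1. (blk_mu (psi n) * transpose_mat (row_of v)) $$ (r, a) * blk_c (psi n) $$ (a, c))"
      by (rule index_mult_mat_sum[OF cX cc rc])
    also have "\<dots> = (if c = 0 then (\<Sum>k<?N. psi n $$ (r+1, k+1) * v $ k) else 0)"
      unfolding lessThan_Suc_eq_insert_0 using rc n X by (simp add: blk_c_def index_psi tau_def sg_def)
    finally show "(1\<^sub>m ?N + blk_mu (psi n) * transpose_mat (row_of v) * blk_c (psi n)) $$ (r, c) =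
        transpose_mat (row_col_mat ?N (\<lambda>r. \<Sum>k<?N. psi n $$ (r+1, k+1) * v $ k) (\<lambda>_. 0)) $$ (r, c)"
      using rc carrier_matD[OF cY] by simp
  qed (use cY in simp_all)
qed

section \<open>The embedding \<open>1 \<perp> -\<close>\<close>

lemma one_perp_carrier: "A \<in> carrier_mat N N \<Longrightarrow> one_perp A \<in> carrier_mat (Suc N) (Suc N)"
  unfolding one_perp_def using four_block_carrier_mat[of "1\<^sub>m 1" 1 1 A N N] by auto

lemma index_one_perp:
  "A \<in> carrier_mat N N \<Longrightarrow> r < Suc N \<Longrightarrow> c < Suc N \<Longrightarrow> one_perp A $$ (r, c) =
    (if r = 0 \<and> c = 0 then 1 else if r = 0 \<or> c = 0 then 0 else A $$ (r - 1, c - 1))"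
  unfolding one_perp_def by auto

lemma one_perp_mult:
  assumes "A \<in> carrier_mat N N" "B \<in> carrier_mat N N"
  shows "one_perp (A * B) = one_perp A * one_perp B"
proof -
  have "one_perp A * one_perp B = four_block_mat (1\<^sub>m 1 * 1\<^sub>m 1 + 0\<^sub>m 1 N * 0\<^sub>m N 1) (1\<^sub>m 1 * 0\<^sub>m 1 N + 0\<^sub>m 1 N * B)
    (0\<^sub>m N 1 * 1\<^sub>m 1 + A * 0\<^sub>m N 1) (0\<^sub>m N 1 * 0\<^sub>m 1 N + A * B)"
    unfolding one_perp_def carrier_matD[OF assms(1)] carrier_matD[OF assms(2)]
    using assms by (intro mult_four_block_mat) auto
  also have "\<dots> = one_perp (A * B)" unfolding one_perp_def using assms
    by (intro cong_four_block_mat) auto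
  finally show ?thesis by simp
qed

lemma one_perp_one: "one_perp (1\<^sub>m N) = 1\<^sub>m (Suc N)"
  unfolding one_perp_def using four_block_one_mat[of 1 N] by simp

lemma one_perp_row_col_mat:
  "one_perp (row_col_mat N f (\<lambda>_. 0)) =
    transpose_mat (row_col_mat (Suc N) (\<lambda>_. 0) (\<lambda>c. if c = 0 then 0 else f (c - 1)))"
proof (rule mat_eq_carrierI[of _ "Suc N"])
  fix r c assume rc: "r < Suc N" "c < Suc N"
  then show "one_perp (row_col_mat N f (\<lambda>_. 0)) $$ (r, c) =
      transpose_mat (row_col_mat (Suc N) (\<lambda>_. 0) (\<lambda>c. if c = 0 then 0 else f (c - 1))) $$ (r, c)"
    by (auto simp: index_one_perp[of _ N])
qed (simp_all add: one_perp_carrier)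

lemma one_perp_transpose_row_col_mat:
  "one_perp (transpose_mat (row_col_mat N g (\<lambda>_. 0))) =
    row_col_mat (Suc N) (\<lambda>_. 0) (\<lambda>r. if r = 0 then 0 else g (r - 1))"
proof (rule mat_eq_carrierI[of _ "Suc N"])
  fix r c assume rc: "r < Suc N" "c < Suc N"
  then show "one_perp (transpose_mat (row_col_mat N g (\<lambda>_. 0))) $$ (r, c) =
      row_col_mat (Suc N) (\<lambda>_. 0) (\<lambda>r. if r = 0 then 0 else g (r - 1)) $$ (r, c)"
    by (auto simp: index_one_perp[of _ N])
qed (simp_all add: one_perp_carrier)

section \<open>The group \<open>E\<^sub>\<psi>\<close>\<close>

lemma row_col_mat_row_inverse:
  assumes "f 0 = 0"
  shows "row_col_mat N f (\<lambda>_. 0) * row_col_mat N (\<lambda>c. - f c) (\<lambda>_. 0) = 1\<^sub>m N"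
proof -
  have "row_col_mat N f (\<lambda>_. 0) * row_col_mat N (\<lambda>c. - f c) (\<lambda>_. 0)
      = row_col_mat N (\<lambda>c. f c + - f c + (if c = 1 then \<Sum>k<N. f k * 0 else 0)) (\<lambda>r. 0 + 0)"
    by (rule row_col_mat_mult) (use assms in simp_all)
  also have "\<dots> = row_col_mat N (\<lambda>_. 0) (\<lambda>_. 0)" by (rule row_col_mat_cong) auto
  finally show ?thesis by (simp add: row_col_mat_zero)
qed

lemma row_col_mat_row_invertible:
  assumes "f 0 = 0"
  shows "\<exists>h\<in>carrier_mat N N. row_col_mat N f (\<lambda>_. 0) * h = 1\<^sub>m N \<and> h * row_col_mat N f (\<lambda>_. 0) = 1\<^sub>m N"
  using row_col_mat_row_inverse[of f N] row_col_mat_row_inverse[of "\<lambda>c. - f c" N] assms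
  by (intro bexI[of _ "row_col_mat N (\<lambda>c. - f c) (\<lambda>_. 0)"]) auto

lemma transpose_invertible:
  fixes A :: "'a::comm_ring_1 mat"
  assumes "A \<in> carrier_mat N N" "\<exists>h\<in>carrier_mat N N. A * h = 1\<^sub>m N \<and> h * A = 1\<^sub>m N"
  shows "\<exists>h\<in>carrier_mat N N. transpose_mat A * h = 1\<^sub>m N \<and> h * transpose_mat A = 1\<^sub>m N"
proof -
  from assms obtain h where h: "h \<in> carrier_mat N N" "A * h = 1\<^sub>m N" "h * A = 1\<^sub>m N" by blast
  have "transpose_mat A * transpose_mat h = transpose_mat (h * A)"
    using h assms by (intro transpose_mult[symmetric]) auto
  moreover have "transpose_mat h * transpose_mat A = transpose_mat (A * h)"
    using h assms by (intro transpose_mult[symmetric]) auto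
  ultimately show ?thesis using h by (intro bexI[of _ "transpose_mat h"]) auto
qed

lemma E_phi_psi_generator_invertible:
  assumes n: "n \<ge> 1"
    and g: "g \<in> {alpha_phi (psi n) v | v. dim_vec v = 2*n - 1} \<union> {beta_phi (psi n) v | v. dim_vec v = 2*n - 1}"
  shows "g \<in> carrier_mat (2*n-1) (2*n-1)"
    and "\<exists>h\<in>carrier_mat (2*n-1) (2*n-1). g * h = 1\<^sub>m (2*n-1) \<and> h * g = 1\<^sub>m (2*n-1)"
proof -
  from g obtain v where v: "dim_vec v = 2*n - 1"
    and gv: "g = alpha_phi (psi n) v \<or> g = beta_phi (psi n) v" by auto
  have "(\<Sum>k<2*n-1. v $ k * psi n $$ (k+1, 0+1)) = 0" "(\<Sum>k<2*n-1. psi n $$ (0+1, k+1) * v $ k) = 0"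
    using n by (auto intro!: sum.neutral simp: index_psi tau_eq_iff)
  with gv show "g \<in> carrier_mat (2*n-1) (2*n-1)"
    and "\<exists>h\<in>carrier_mat (2*n-1) (2*n-1). g * h = 1\<^sub>m (2*n-1) \<and> h * g = 1\<^sub>m (2*n-1)"
    by (auto simp: alpha_phi_psi[OF n v] beta_phi_psi[OF n v]
        intro!: row_col_mat_row_invertible transpose_invertible)
qed

lemma E_phi_psi_carrier:
  assumes "n \<ge> 1" "A \<in> E_phi (psi n :: 'a::comm_ring_1 mat)"
  shows "A \<in> carrier_mat (2*n-1) (2*n-1)"
proof -
  have "{alpha_phi (psi n) v | v. dim_vec v = 2*n - 1} \<union> {beta_phi (psi n) v | v. dim_vec v = 2*n - 1}
      \<subseteq> carrier_mat (2*n-1) (2*n-1)"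
    using E_phi_psi_generator_invertible(1)[OF assms(1)] by blast
  from gen_subgroup_carrier[OF this] show ?thesis using assms(2) unfolding E_phi_def dim_psi by blast
qed

lemma E_phi_psi_inverse:
  assumes "n \<ge> 1" "A \<in> E_phi (psi n :: 'a::comm_ring_1 mat)"
  shows "\<exists>B\<in>E_phi (psi n). A * B = 1\<^sub>m (2*n-1) \<and> B * A = 1\<^sub>m (2*n-1)"
proof -
  let ?G = "{alpha_phi (psi n) v | v. dim_vec v = 2*n - 1} \<union> {beta_phi (psi n) v | v. dim_vec v = 2*n - 1}"
  have "?G \<subseteq> carrier_mat (2*n-1) (2*n-1)"
    using E_phi_psi_generator_invertible(1)[OF assms(1)] by blast
  moreover have "\<exists>h\<in>carrier_mat (2*n-1) (2*n-1). g * h = 1\<^sub>m (2*n-1) \<and> h * g = 1\<^sub>m (2*n-1)"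
    if "g \<in> ?G" for g :: "'a mat"
    using E_phi_psi_generator_invertible(2)[OF assms(1) that] .
  moreover have "A \<in> gen_subgroup (2*n-1) ?G" using assms(2) unfolding E_phi_def dim_psi .
  ultimately show ?thesis unfolding E_phi_def dim_psi by (rule gen_subgroup_inverse)
qed

lemma E_phi_mult: "A \<in> E_phi phi \<Longrightarrow> B \<in> E_phi phi \<Longrightarrow> A * B \<in> E_phi phi"
  unfolding E_phi_def by (rule gen_subgroup.gen_mult)

lemma E_phi_one: "1\<^sub>m (dim_row phi - 1) \<in> E_phi phi"
  unfolding E_phi_def by (rule gen_subgroup.gen_one)

lemma alpha_phi_in_E_phi: "dim_vec v = dim_row phi - 1 \<Longrightarrow> alpha_phi phi v \<in> E_phi phi"
  unfolding E_phi_def by (intro gen_subgroup.gen_gen) blast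

lemma beta_phi_in_E_phi: "dim_vec v = dim_row phi - 1 \<Longrightarrow> beta_phi phi v \<in> E_phi phi"
  unfolding E_phi_def by (intro gen_subgroup.gen_gen) blast

definition psi_vec :: "nat \<Rightarrow> (nat \<Rightarrow> 'a::comm_ring_1) \<Rightarrow> 'a vec" where
  "psi_vec n q = vec (2*n - 1) (\<lambda>k. sg (k+1) * q (tau (k+1)))"

lemma dim_psi_vec [simp]: "dim_vec (psi_vec n q) = 2*n - 1"
  by (simp add: psi_vec_def)

lemma sum_shift_delta:
  "(\<Sum>k<(N::nat). if k + 1 = t then a else 0) = (if 1 \<le> t \<and> t \<le> N then a else 0)"
proof -
  have "(\<Sum>k<N. if k + 1 = t then a else 0) = (\<Sum>k<N. if k = t - 1 then (if 1 \<le> t then a else 0) else 0)"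
    by (rule sum.cong) auto
  also have "\<dots> = (if 1 \<le> t \<and> t \<le> N then a else 0)" by auto
  finally show ?thesis .
qed

lemma one_perp_alpha_phi_psi_vec:
  assumes n: "n \<ge> 1" and q: "q 0 = 0" "q 1 = 0"
  shows "one_perp (alpha_phi (psi n) (psi_vec n q)) = transpose_mat (row_col_mat (2*n) (\<lambda>_. 0) (\<lambda>c. - q c))"
proof -
  have N: "Suc (2*n - 1) = 2*n" using n by simp
  have "one_perp (alpha_phi (psi n) (psi_vec n q)) = transpose_mat (row_col_mat (2*n) (\<lambda>_. 0)
     (\<lambda>c. if c = 0 then 0 else - (\<Sum>k<2*n-1. psi_vec n q $ k * psi n $$ (k+1, c - 1 + 1))))"
    unfolding alpha_phi_psi[OF n dim_psi_vec] one_perp_row_col_mat N ..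
  also have "\<dots> = transpose_mat (row_col_mat (2*n) (\<lambda>_. 0) (\<lambda>c. - q c))"
  proof (intro arg_cong[where f=transpose_mat] row_col_mat_cong)
    fix c assume c: "c < 2*n"
    show "(if c = 0 then 0 else - (\<Sum>k<2*n-1. psi_vec n q $ k * psi n $$ (k+1, c - 1 + 1))) = - q c"
    proof (cases "c = 0")
      case False
      have "(\<Sum>k<2*n-1. psi_vec n q $ k * psi n $$ (k+1, c - 1 + 1)) = (\<Sum>k<2*n-1. if k + 1 = tau c then q c else 0)"
      proof (rule sum.cong)
        fix k assume "k \<in> {..<2*n-1}"
        then have k: "k < 2*n - 1" "k + 1 < 2*n" by auto
        have "(k + 1 = tau c) = (tau (k + 1) = c)" by (rule tau_eq_iff)
        then have "psi_vec n q $ k * psi n $$ (k+1, c) = (if k + 1 = tau c then q c else 0)"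
          using k c by (auto simp: psi_vec_def index_psi)
        then show "psi_vec n q $ k * psi n $$ (k+1, c - 1 + 1) = (if k + 1 = tau c then q c else 0)"
          using False by simp
      qed simp
      also have "\<dots> = q c"
        unfolding sum_shift_delta using tau_less[OF c] q False tau_eq_0_iff[of c] by auto
      finally show ?thesis using False by simp
    qed (use q in simp)
  qed simp
  finally show ?thesis .
qed

lemma one_perp_beta_phi_psi_vec:
  assumes n: "n \<ge> 1" and q: "q 0 = 0" "q 1 = 0"
  shows "one_perp (beta_phi (psi n) (psi_vec n q)) = row_col_mat (2*n) (\<lambda>_. 0) (\<lambda>r. - q r)"
proof -
  have N: "Suc (2*n - 1) = 2*n" using n by simp
  have "one_perp (beta_phi (psi n) (psi_vec n q)) = row_col_mat (2*n) (\<lambda>_. 0)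
     (\<lambda>r. if r = 0 then 0 else (\<Sum>k<2*n-1. psi n $$ (r - 1 + 1, k+1) * psi_vec n q $ k))"
    unfolding beta_phi_psi[OF n dim_psi_vec] one_perp_transpose_row_col_mat N ..
  also have "\<dots> = row_col_mat (2*n) (\<lambda>_. 0) (\<lambda>r. - q r)"
  proof (intro row_col_mat_cong)
    fix r assume r: "r < 2*n"
    show "(if r = 0 then 0 else (\<Sum>k<2*n-1. psi n $$ (r - 1 + 1, k+1) * psi_vec n q $ k)) = - q r"
    proof (cases "r = 0")
      case False
      have "(\<Sum>k<2*n-1. psi n $$ (r - 1 + 1, k+1) * psi_vec n q $ k) = (\<Sum>k<2*n-1. if k + 1 = tau r then - q r else 0)"
      proof (rule sum.cong)
        fix k assume "k \<in> {..<2*n-1}"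
        then have k: "k < 2*n - 1" "k + 1 < 2*n" by auto
        have "psi n $$ (r, k+1) * psi_vec n q $ k = (if k + 1 = tau r then - q r else 0)"
          using k r by (auto simp: psi_vec_def index_psi)
        then show "psi n $$ (r - 1 + 1, k+1) * psi_vec n q $ k = (if k + 1 = tau r then - q r else 0)"
          using False by simp
      qed simp
      also have "\<dots> = - q r"
        unfolding sum_shift_delta using tau_less[OF r] q False tau_eq_0_iff[of r] by auto
      finally show ?thesis using False by simp
    qed (use q in simp)
  qed simp
  finally show ?thesis .
qed

section \<open>The set \<open>(1 \<perp> E\<^sub>\<psi>) ESp\<close> and its stability under elementary matrices\<close>

definition perp_ESp :: "nat \<Rightarrow> 'a::comm_ring_1 mat set" where
  "perp_ESp n = {M. \<exists>\<rho>\<in>E_phi (psi n :: 'a mat). \<exists>s\<in>ESp n. M = one_perp \<rho> * s}"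

lemma perp_ESpI: "\<rho> \<in> E_phi (psi n) \<Longrightarrow> s \<in> ESp n \<Longrightarrow> one_perp \<rho> * s \<in> perp_ESp n"
  unfolding perp_ESp_def by blast

lemma one_perp_E_phi_psi_carrier:
  assumes "n \<ge> 1" "\<rho> \<in> E_phi (psi n :: 'a::comm_ring_1 mat)"
  shows "one_perp \<rho> \<in> carrier_mat (2*n) (2*n)"
  using one_perp_carrier[OF E_phi_psi_carrier[OF assms]] assms(1) by simp

lemma perp_ESp_carrier:
  assumes "n \<ge> 1" "X \<in> perp_ESp n"
  shows "X \<in> carrier_mat (2*n) (2*n)"
  using assms(2) one_perp_E_phi_psi_carrier[OF assms(1)] ESp_carrier
  unfolding perp_ESp_def by (blast intro: mult_carrier_mat)

lemma one_perp_mult_perp_ESp: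
  assumes n: "n \<ge> 1" and \<rho>0: "\<rho>0 \<in> E_phi (psi n)" and X: "X \<in> perp_ESp n"
  shows "one_perp \<rho>0 * X \<in> perp_ESp n"
proof -
  from X obtain \<rho> s where \<rho>: "\<rho> \<in> E_phi (psi n)" and s: "s \<in> ESp n" and X: "X = one_perp \<rho> * s"
    unfolding perp_ESp_def by auto
  have "one_perp \<rho>0 * X = (one_perp \<rho>0 * one_perp \<rho>) * s" unfolding X
    by (rule assoc_mult_mat[symmetric, OF one_perp_E_phi_psi_carrier[OF n \<rho>0]
          one_perp_E_phi_psi_carrier[OF n \<rho>] ESp_carrier[OF s]])
  also have "\<dots> = one_perp (\<rho>0 * \<rho>) * s"
    using one_perp_mult[OF E_phi_psi_carrier[OF n \<rho>0] E_phi_psi_carrier[OF n \<rho>]] by simp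
  finally show ?thesis unfolding perp_ESp_def using E_phi_mult[OF \<rho>0 \<rho>] s by blast
qed

lemma perp_ESp_mult_ESp:
  assumes n: "n \<ge> 1" and X: "X \<in> perp_ESp n" and s': "s' \<in> ESp n"
  shows "X * s' \<in> perp_ESp n"
proof -
  from X obtain \<rho> s where \<rho>: "\<rho> \<in> E_phi (psi n)" and s: "s \<in> ESp n" and X: "X = one_perp \<rho> * s"
    unfolding perp_ESp_def by auto
  have "X * s' = one_perp \<rho> * (s * s')" unfolding X
    by (rule assoc_mult_mat[OF one_perp_E_phi_psi_carrier[OF n \<rho>] ESp_carrier[OF s] ESp_carrier[OF s']])
  then show ?thesis unfolding perp_ESp_def using ESp_mult[OF s s'] \<rho> by blast
qed

lemma one_mat_in_perp_ESp:
  assumes "n \<ge> 1"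
  shows "1\<^sub>m (2*n) \<in> (perp_ESp n :: 'a::comm_ring_1 mat set)"
proof -
  have "one_perp (1\<^sub>m (2*n-1)) * 1\<^sub>m (2*n) = (1\<^sub>m (2*n) :: 'a mat)"
    using assms by (simp add: one_perp_one)
  moreover have "one_perp (1\<^sub>m (2*n-1)) * 1\<^sub>m (2*n) \<in> (perp_ESp n :: 'a mat set)"
    using perp_ESpI[OF E_phi_one[of "psi n :: 'a mat"] ESp_one[of n]] by simp
  ultimately show ?thesis by simp
qed

text \<open>A first-row matrix \<open>I + e\<^sub>1 w\<close> is a symplectic \<open>row_col_mat (2*n) w q\<close> corrected by
  \<open>I - q e\<^sub>2\<^sup>t = 1 \<perp> \<beta>\<^sub>\<psi>(v)\<close>.\<close>

lemma row_col_mat_row_in_perp_ESp: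
  assumes n: "n \<ge> 1" and w0: "w 0 = 0"
  shows "row_col_mat (2*n) w (\<lambda>_. 0) \<in> perp_ESp n"
proof -
  obtain q where q: "q 0 = 0" "q 1 = 0" "row_col_mat (2*n) w q \<in> ESp n"
    using ESp_row_col_mat_exists[where p=w, OF w0, of n] by blast
  have "one_perp (beta_phi (psi n) (psi_vec n q)) * row_col_mat (2*n) w q
      = row_col_mat (2*n) (\<lambda>_. 0) (\<lambda>r. - q r) * row_col_mat (2*n) w q"
    unfolding one_perp_beta_phi_psi_vec[OF n q(1,2)] ..
  also have "\<dots> = row_col_mat (2*n) (\<lambda>c. 0 + w c + (if c = 1 then \<Sum>k<2*n. 0 * q k else 0)) (\<lambda>r. - q r + q r)"
    by (rule row_col_mat_mult) (use q in simp_all)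
  also have "\<dots> = row_col_mat (2*n) w (\<lambda>_. 0)" by (rule row_col_mat_cong) auto
  finally have e: "one_perp (beta_phi (psi n) (psi_vec n q)) * row_col_mat (2*n) w q = row_col_mat (2*n) w (\<lambda>_. 0)" .
  have "beta_phi (psi n) (psi_vec n q) \<in> E_phi (psi n)" by (rule beta_phi_in_E_phi) simp
  from perp_ESpI[OF this q(3)] show ?thesis unfolding e .
qed

text \<open>For a first-column matrix the symplectic part must be transposed; its first row is first
  adjusted by \<open>se n 1 2 S\<close> so that the transposed product with \<open>1 \<perp> \<alpha>\<^sub>\<psi>(v)\<close> has no
  leftover entry at \<open>(2,1)\<close>.\<close>

lemma transpose_row_col_mat_row_in_perp_ESp:
  assumes n: "n \<ge> 1" and p0: "p 0 = 0"
  shows "transpose_mat (row_col_mat (2*n) p (\<lambda>_. 0)) \<in> perp_ESp n"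
proof -
  obtain q where q: "q 0 = 0" "q 1 = 0" "row_col_mat (2*n) p q \<in> ESp n"
    using ESp_row_col_mat_exists[where p=p, OF p0, of n] by blast
  define S where "S = (\<Sum>k<2*n. p k * q k)"
  define p' where "p' = (\<lambda>c. p c + (if c = 1 then S else 0))"
  have "(\<Sum>k<2*n. (if k = 1 then S else 0) * q k) = 0" by (rule sum.neutral) (use q in auto)
  then have "se n 1 2 S * row_col_mat (2*n) p q = row_col_mat (2*n) p' q"
    unfolding se_1_2_row_col p'_def
    by (subst row_col_mat_mult) (use q in \<open>auto intro!: row_col_mat_cong\<close>)
  moreover have "se n 1 2 S \<in> ESp n" using n by (intro se_in_ESp) auto
  ultimately have "row_col_mat (2*n) p' q \<in> ESp n" using q(3) ESp_mult by metis
  then have s: "transpose_mat (row_col_mat (2*n) p' q) \<in> ESp n" by (rule ESp_transpose)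
  have sum: "(\<Sum>k<2*n. p' k * - q k) = - S"
  proof -
    have "(\<Sum>k<2*n. p' k * - q k) = (\<Sum>k<2*n. - (p k * q k))"
      unfolding p'_def by (rule sum.cong) (use q in \<open>auto simp: algebra_simps\<close>)
    then show ?thesis by (simp add: sum_negf S_def)
  qed
  have "one_perp (alpha_phi (psi n) (psi_vec n q)) * transpose_mat (row_col_mat (2*n) p' q)
      = transpose_mat (row_col_mat (2*n) (\<lambda>_. 0) (\<lambda>c. - q c)) * transpose_mat (row_col_mat (2*n) p' q)"
    unfolding one_perp_alpha_phi_psi_vec[OF n q(1,2)] ..
  also have "\<dots> = transpose_mat (row_col_mat (2*n) p' q * row_col_mat (2*n) (\<lambda>_. 0) (\<lambda>c. - q c))"
    by (rule transpose_mult[symmetric]) auto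
  also have "row_col_mat (2*n) p' q * row_col_mat (2*n) (\<lambda>_. 0) (\<lambda>c. - q c)
      = row_col_mat (2*n) (\<lambda>c. p' c + 0 + (if c = 1 then \<Sum>k<2*n. p' k * - q k else 0)) (\<lambda>r. q r + - q r)"
    by (rule row_col_mat_mult) (use q p0 in \<open>simp_all add: p'_def\<close>)
  also have "\<dots> = row_col_mat (2*n) p (\<lambda>_. 0)"
    unfolding sum by (rule row_col_mat_cong) (auto simp: p'_def)
  finally have e: "one_perp (alpha_phi (psi n) (psi_vec n q)) * transpose_mat (row_col_mat (2*n) p' q)
      = transpose_mat (row_col_mat (2*n) p (\<lambda>_. 0))" .
  have "alpha_phi (psi n) (psi_vec n q) \<in> E_phi (psi n)" by (rule alpha_phi_in_E_phi) simp
  from perp_ESpI[OF this s] show ?thesis unfolding e .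
qed

lemma row_col_mat_row_conj:
  assumes M: "M \<in> carrier_mat N N" and M0: "\<And>r. r < N \<Longrightarrow> M $$ (r, 0) = (if r = 0 then 1 else 0)"
  shows "row_col_mat N w (\<lambda>_. 0) * M = M * row_col_mat N (\<lambda>c. \<Sum>k<N. w k * M $$ (k, c)) (\<lambda>_. 0)"
proof (rule mat_eq_carrierI[of _ N])
  fix r c assume r: "r < N" and c: "c < N"
  have "(row_col_mat N w (\<lambda>_. 0) * M) $$ (r, c) = (\<Sum>k<N. row_col_mat N w (\<lambda>_. 0) $$ (r, k) * M $$ (k, c))"
    by (rule index_mult_mat_sum[OF row_col_mat_carrier M r c])
  also have "\<dots> = (\<Sum>k<N. (if r = k then M $$ (k, c) else 0) + (if r = 0 then w k * M $$ (k, c) else 0))"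
    by (rule sum.cong) (use r in \<open>auto simp: algebra_simps\<close>)
  also have "\<dots> = M $$ (r, c) + (if r = 0 then (\<Sum>k<N. w k * M $$ (k, c)) else 0)"
    using r by (simp add: sum.distrib)
  finally have L: "(row_col_mat N w (\<lambda>_. 0) * M) $$ (r, c) = M $$ (r, c) + (if r = 0 then (\<Sum>k<N. w k * M $$ (k, c)) else 0)" .
  have "(M * row_col_mat N (\<lambda>c. \<Sum>k<N. w k * M $$ (k, c)) (\<lambda>_. 0)) $$ (r, c)
      = (\<Sum>k<N. M $$ (r, k) * row_col_mat N (\<lambda>c. \<Sum>k<N. w k * M $$ (k, c)) (\<lambda>_. 0) $$ (k, c))"
    by (rule index_mult_mat_sum[OF M row_col_mat_carrier r c])
  also have "\<dots> = (\<Sum>k<N. (if k = c then M $$ (r, k) else 0) + (if k = 0 then M $$ (r, 0) * (\<Sum>k<N. w k * M $$ (k, c)) else 0))"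
    by (rule sum.cong) (use c in \<open>auto simp: algebra_simps\<close>)
  also have "\<dots> = M $$ (r, c) + M $$ (r, 0) * (\<Sum>k<N. w k * M $$ (k, c))"
    using c by (simp add: sum.distrib)
  also have "\<dots> = M $$ (r, c) + (if r = 0 then (\<Sum>k<N. w k * M $$ (k, c)) else 0)"
    using M0[OF r] by simp
  finally show "(row_col_mat N w (\<lambda>_. 0) * M) $$ (r, c) = (M * row_col_mat N (\<lambda>c. \<Sum>k<N. w k * M $$ (k, c)) (\<lambda>_. 0)) $$ (r, c)"
    using L by simp
qed (use M in auto)

lemma transpose_row_col_mat_row_conj:
  assumes M: "M \<in> carrier_mat N N" and Mi: "Mi \<in> carrier_mat N N" and MMi: "M * Mi = 1\<^sub>m N"
    and M0: "\<And>c. c < N \<Longrightarrow> M $$ (0, c) = (if c = 0 then 1 else 0)"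
  shows "transpose_mat (row_col_mat N p (\<lambda>_. 0)) * M
    = M * transpose_mat (row_col_mat N (\<lambda>k. \<Sum>j<N. Mi $$ (k, j) * p j) (\<lambda>_. 0))"
proof (rule mat_eq_carrierI[of _ N])
  have tF: "transpose_mat (row_col_mat N f (\<lambda>_. 0)) \<in> carrier_mat N N" for f by simp
  fix r c assume r: "r < N" and c: "c < N"
  have "(transpose_mat (row_col_mat N p (\<lambda>_. 0)) * M) $$ (r, c)
      = (\<Sum>k<N. transpose_mat (row_col_mat N p (\<lambda>_. 0)) $$ (r, k) * M $$ (k, c))"
    by (rule index_mult_mat_sum[OF tF M r c])
  also have "\<dots> = (\<Sum>k<N. (if k = r then M $$ (k, c) else 0) + (if k = 0 then p r * M $$ (0, c) else 0))"
    by (rule sum.cong) (use r in \<open>auto simp: algebra_simps\<close>)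
  also have "\<dots> = M $$ (r, c) + p r * M $$ (0, c)"
    using r by (simp add: sum.distrib)
  also have "\<dots> = M $$ (r, c) + (if c = 0 then p r else 0)" using M0[OF c] by simp
  finally have L: "(transpose_mat (row_col_mat N p (\<lambda>_. 0)) * M) $$ (r, c) = M $$ (r, c) + (if c = 0 then p r else 0)" .
  have "(M * transpose_mat (row_col_mat N (\<lambda>k. \<Sum>j<N. Mi $$ (k, j) * p j) (\<lambda>_. 0))) $$ (r, c)
     = (\<Sum>k<N. M $$ (r, k) * transpose_mat (row_col_mat N (\<lambda>k. \<Sum>j<N. Mi $$ (k, j) * p j) (\<lambda>_. 0)) $$ (k, c))"
    by (rule index_mult_mat_sum[OF M tF r c])
  also have "\<dots> = (\<Sum>k<N. (if k = c then M $$ (r, k) else 0) + (if c = 0 then M $$ (r, k) * (\<Sum>j<N. Mi $$ (k, j) * p j) else 0))"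
    by (rule sum.cong) (use c in \<open>auto simp: algebra_simps\<close>)
  also have "\<dots> = M $$ (r, c) + (if c = 0 then p r else 0)"
    using c sum_mult_inverse_mat[OF M Mi MMi r] by (simp add: sum.distrib)
  finally show "(transpose_mat (row_col_mat N p (\<lambda>_. 0)) * M) $$ (r, c) =
      (M * transpose_mat (row_col_mat N (\<lambda>k. \<Sum>j<N. Mi $$ (k, j) * p j) (\<lambda>_. 0))) $$ (r, c)"
    using L by simp
qed (use M in auto)

lemma elem_mat_1_j_row_col: "2 \<le> j \<Longrightarrow> elem_mat m 1 j l = row_col_mat m (\<lambda>c. if c + 1 = j then l else 0) (\<lambda>_. 0)"
  by (rule mat_eq_carrierI[OF elem_mat_carrier row_col_mat_carrier]) (auto simp: index_elem_mat)

lemma elem_mat_i_1_row_col: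
  "2 \<le> i \<Longrightarrow> elem_mat m i 1 l = transpose_mat (row_col_mat m (\<lambda>r. if r + 1 = i then l else 0) (\<lambda>_. 0))"
  by (rule mat_eq_carrierI[OF elem_mat_carrier]) (auto simp: index_elem_mat)

text \<open>Conjugating by \<open>1 \<perp> \<rho>\<close> keeps a first-row (first-column) matrix of the same shape,
  so these can be moved past the \<open>E\<^sub>\<psi>\<close>-factor and absorbed.\<close>

lemma elem_mat_1_j_mult_perp_ESp:
  assumes n: "n \<ge> 1" and j: "2 \<le> j" and X: "X \<in> perp_ESp n"
  shows "elem_mat (2*n) 1 j l * X \<in> perp_ESp n"
proof -
  from X obtain \<rho> s where \<rho>: "\<rho> \<in> E_phi (psi n)" and s: "s \<in> ESp n" and X: "X = one_perp \<rho> * s"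
    unfolding perp_ESp_def by auto
  define M where "M = one_perp \<rho>"
  define w where "w = (\<lambda>c. if c + 1 = j then l else (0::'a))"
  define w' where "w' = (\<lambda>c. \<Sum>k<2*n. w k * M $$ (k, c))"
  have M: "M \<in> carrier_mat (2*n) (2*n)" unfolding M_def by (rule one_perp_E_phi_psi_carrier[OF n \<rho>])
  have M0: "M $$ (r, 0) = (if r = 0 then 1 else 0)" if "r < 2*n" for r
    unfolding M_def using index_one_perp[OF E_phi_psi_carrier[OF n \<rho>], of r 0] that n by simp
  have "w' 0 = 0" unfolding w'_def using M0 j by (intro sum.neutral) (auto simp: w_def)
  then have F: "row_col_mat (2*n) w' (\<lambda>_. 0) * s \<in> perp_ESp n"
    by (rule perp_ESp_mult_ESp[OF n row_col_mat_row_in_perp_ESp[OF n] s])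
  have "elem_mat (2*n) 1 j l * X = (row_col_mat (2*n) w (\<lambda>_. 0) * M) * s"
    unfolding elem_mat_1_j_row_col[OF j] X M_def[symmetric] w_def
    by (rule assoc_mult_mat[symmetric, OF row_col_mat_carrier M ESp_carrier[OF s]])
  also have "row_col_mat (2*n) w (\<lambda>_. 0) * M = M * row_col_mat (2*n) w' (\<lambda>_. 0)"
    unfolding w'_def by (rule row_col_mat_row_conj[OF M M0])
  also have "(M * row_col_mat (2*n) w' (\<lambda>_. 0)) * s = M * (row_col_mat (2*n) w' (\<lambda>_. 0) * s)"
    by (rule assoc_mult_mat[OF M row_col_mat_carrier ESp_carrier[OF s]])
  finally show ?thesis using one_perp_mult_perp_ESp[OF n \<rho> F] unfolding M_def by simp
qed

lemma elem_mat_i_1_mult_perp_ESp: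
  assumes n: "n \<ge> 1" and i: "2 \<le> i" and X: "X \<in> perp_ESp n"
  shows "elem_mat (2*n) i 1 l * X \<in> perp_ESp n"
proof -
  from X obtain \<rho> s where \<rho>: "\<rho> \<in> E_phi (psi n)" and s: "s \<in> ESp n" and X: "X = one_perp \<rho> * s"
    unfolding perp_ESp_def by auto
  obtain \<rho>' where \<rho>': "\<rho>' \<in> E_phi (psi n)" and \<rho>\<rho>': "\<rho> * \<rho>' = 1\<^sub>m (2*n-1)"
    using E_phi_psi_inverse[OF n \<rho>] by blast
  define M where "M = one_perp \<rho>"
  define Mi where "Mi = one_perp \<rho>'"
  define p where "p = (\<lambda>r. if r + 1 = i then l else (0::'a))"
  define p' where "p' = (\<lambda>k. \<Sum>j<2*n. Mi $$ (k, j) * p j)"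
  have M: "M \<in> carrier_mat (2*n) (2*n)" unfolding M_def by (rule one_perp_E_phi_psi_carrier[OF n \<rho>])
  have Mi: "Mi \<in> carrier_mat (2*n) (2*n)" unfolding Mi_def by (rule one_perp_E_phi_psi_carrier[OF n \<rho>'])
  have MMi: "M * Mi = 1\<^sub>m (2*n)"
    unfolding M_def Mi_def using one_perp_mult[OF E_phi_psi_carrier[OF n \<rho>] E_phi_psi_carrier[OF n \<rho>']]
    using n by (simp add: \<rho>\<rho>' one_perp_one)
  have M0: "M $$ (0, c) = (if c = 0 then 1 else 0)" if "c < 2*n" for c
    unfolding M_def using index_one_perp[OF E_phi_psi_carrier[OF n \<rho>], of 0 c] that n by simp
  have "Mi $$ (0, c) = (if c = 0 then 1 else 0)" if "c < 2*n" for c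
    unfolding Mi_def using index_one_perp[OF E_phi_psi_carrier[OF n \<rho>'], of 0 c] that n by simp
  then have "p' 0 = 0" unfolding p'_def using i by (intro sum.neutral) (auto simp: p_def)
  then have F: "transpose_mat (row_col_mat (2*n) p' (\<lambda>_. 0)) * s \<in> perp_ESp n"
    by (rule perp_ESp_mult_ESp[OF n transpose_row_col_mat_row_in_perp_ESp[OF n] s])
  have tF: "transpose_mat (row_col_mat (2*n) f (\<lambda>_. 0)) \<in> carrier_mat (2*n) (2*n)" for f by simp
  have "elem_mat (2*n) i 1 l * X = (transpose_mat (row_col_mat (2*n) p (\<lambda>_. 0)) * M) * s"
    unfolding elem_mat_i_1_row_col[OF i] X M_def[symmetric] p_def
    by (rule assoc_mult_mat[symmetric, OF tF M ESp_carrier[OF s]])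
  also have "transpose_mat (row_col_mat (2*n) p (\<lambda>_. 0)) * M = M * transpose_mat (row_col_mat (2*n) p' (\<lambda>_. 0))"
    unfolding p'_def by (rule transpose_row_col_mat_row_conj[OF M Mi MMi M0])
  also have "(M * transpose_mat (row_col_mat (2*n) p' (\<lambda>_. 0))) * s = M * (transpose_mat (row_col_mat (2*n) p' (\<lambda>_. 0)) * s)"
    by (rule assoc_mult_mat[OF M tF ESp_carrier[OF s]])
  finally show ?thesis using one_perp_mult_perp_ESp[OF n \<rho> F] unfolding M_def by simp
qed

definition elem_i1_1j_mat :: "nat \<Rightarrow> nat \<Rightarrow> nat \<Rightarrow> 'a::comm_ring_1 \<Rightarrow> 'a \<Rightarrow> 'a mat" where
  "elem_i1_1j_mat m i' j' a b = mat m m (\<lambda>(r, c). (if r = c then 1 else 0) + (if r = i' \<and> c = 0 then a else 0)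
     + (if r = 0 \<and> c = j' then b else 0) + (if r = i' \<and> c = j' then a * b else 0))"

lemma elem_i1_1j_mat_carrier [simp]: "elem_i1_1j_mat m i' j' a b \<in> carrier_mat m m"
  by (simp add: elem_i1_1j_mat_def)

lemma elem_mat_i_1_mult_1_j:
  assumes "i' \<noteq> 0" "j' \<noteq> 0"
  shows "elem_mat m (Suc i') 1 a * elem_mat m 1 (Suc j') b = elem_i1_1j_mat m i' j' a b"
proof (rule mat_eq_carrierI[OF mult_carrier_mat[OF elem_mat_carrier elem_mat_carrier] elem_i1_1j_mat_carrier])
  fix r c assume r: "r < m" and c: "c < m"
  have "(elem_mat m (Suc i') 1 a * elem_mat m 1 (Suc j') b) $$ (r, c)
      = (\<Sum>k<m. elem_mat m (Suc i') 1 a $$ (r, k) * elem_mat m 1 (Suc j') b $$ (k, c))"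
    by (rule index_mult_mat_sum[OF elem_mat_carrier elem_mat_carrier r c])
  also have "\<dots> = (\<Sum>k<m. ((if r = k then 1 else 0) + (if r = i' \<and> k = 0 then a else 0))
      * ((if k = c then 1 else 0) + (if k = 0 \<and> c = j' then b else 0)))"
    by (rule sum.cong) (use r c in \<open>auto simp: index_elem_mat\<close>)
  also have "\<dots> = elem_i1_1j_mat m i' j' a b $$ (r, c)"
    using r c assms
    by (simp add: elem_i1_1j_mat_def algebra_simps sum.distrib if_distrib[where f="\<lambda>x. x * _"]
        if_distrib[where f="\<lambda>x. _ * x"] sum.delta sum.delta' cong: if_cong)
  finally show "(elem_mat m (Suc i') 1 a * elem_mat m 1 (Suc j') b) $$ (r, c) = elem_i1_1j_mat m i' j' a b $$ (r, c)" .
qed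

lemma elem_i1_1j_mat_commutator:
  assumes "i' \<noteq> 0" "j' \<noteq> 0" "i' \<noteq> j'"
  shows "elem_i1_1j_mat m i' j' l 1 * elem_i1_1j_mat m i' j' (- l) (- 1) = elem_mat m (Suc i') (Suc j') l"
proof (rule mat_eq_carrierI[OF mult_carrier_mat[OF elem_i1_1j_mat_carrier elem_i1_1j_mat_carrier] elem_mat_carrier])
  fix r c assume r: "r < m" and c: "c < m"
  have "(elem_i1_1j_mat m i' j' l 1 * elem_i1_1j_mat m i' j' (- l) (- 1)) $$ (r, c)
      = (\<Sum>k<m. elem_i1_1j_mat m i' j' l 1 $$ (r, k) * elem_i1_1j_mat m i' j' (- l) (- 1) $$ (k, c))"
    by (rule index_mult_mat_sum[OF elem_i1_1j_mat_carrier elem_i1_1j_mat_carrier r c])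
  also have "\<dots> = (\<Sum>k<m. ((if r = k then 1 else 0) + (if r = i' \<and> k = 0 then l else 0)
     + (if r = 0 \<and> k = j' then 1 else 0) + (if r = i' \<and> k = j' then l else 0)) *
      ((if k = c then 1 else 0) + (if k = i' \<and> c = 0 then - l else 0)
     + (if k = 0 \<and> c = j' then - 1 else 0) + (if k = i' \<and> c = j' then l else 0)))"
    by (rule sum.cong) (use r c in \<open>auto simp: elem_i1_1j_mat_def\<close>)
  also have "\<dots> = elem_mat m (Suc i') (Suc j') l $$ (r, c)"
    using r c assms
    by (simp add: index_elem_mat algebra_simps sum.distrib if_distrib[where f="\<lambda>x. x * _"]
        if_distrib[where f="\<lambda>x. _ * x"] sum.delta sum.delta' cong: if_cong)
  finally show "(elem_i1_1j_mat m i' j' l 1 * elem_i1_1j_mat m i' j' (- l) (- 1)) $$ (r, c)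
      = elem_mat m (Suc i') (Suc j') l $$ (r, c)" .
qed

lemma elem_mat_commutator:
  assumes "2 \<le> i" "2 \<le> j" "i \<noteq> j"
  shows "elem_mat m i j l = (elem_mat m i 1 l * elem_mat m 1 j 1) * (elem_mat m i 1 (- l) * elem_mat m 1 j (- 1))"
proof -
  obtain i' j' where i: "i = Suc i'" "i' \<noteq> 0" and j: "j = Suc j'" "j' \<noteq> 0" and "i' \<noteq> j'"
    using assms by (cases i; cases j) auto
  show ?thesis
    unfolding i(1) j(1) elem_mat_i_1_mult_1_j[OF i(2) j(2)] elem_i1_1j_mat_commutator[OF i(2) j(2) \<open>i' \<noteq> j'\<close>] ..
qed

lemma elem_mat_mult_perp_ESp:
  assumes n: "n \<ge> 1" and ij: "1 \<le> i" "1 \<le> j" "i \<noteq> j" and X: "X \<in> perp_ESp n"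
  shows "elem_mat (2*n) i j l * X \<in> perp_ESp n"
proof -
  consider "i = 1" | "j = 1" | "2 \<le> i" "2 \<le> j" using ij by linarith
  then show ?thesis
  proof cases
    case 1
    then show ?thesis using elem_mat_1_j_mult_perp_ESp[OF n _ X] ij by simp
  next
    case 2
    then show ?thesis using elem_mat_i_1_mult_perp_ESp[OF n _ X] ij by simp
  next
    case 3
    let ?A = "elem_mat (2*n) i 1 l" and ?B = "elem_mat (2*n) 1 j 1"
      and ?C = "elem_mat (2*n) i 1 (- l)" and ?D = "elem_mat (2*n) 1 j (- 1)"
    have cX: "X \<in> carrier_mat (2*n) (2*n)" by (rule perp_ESp_carrier[OF n X])
    have "elem_mat (2*n) i j l * X = (?A * ?B) * ((?C * ?D) * X)"
      unfolding elem_mat_commutator[OF 3 ij(3)]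
      by (rule assoc_mult_mat[OF mult_carrier_mat[OF elem_mat_carrier elem_mat_carrier]
            mult_carrier_mat[OF elem_mat_carrier elem_mat_carrier] cX])
    also have "(?C * ?D) * X = ?C * (?D * X)" by (rule assoc_mult_mat[OF elem_mat_carrier elem_mat_carrier cX])
    also have "(?A * ?B) * (?C * (?D * X)) = ?A * (?B * (?C * (?D * X)))"
      by (rule assoc_mult_mat[OF elem_mat_carrier elem_mat_carrier
            mult_carrier_mat[OF elem_mat_carrier mult_carrier_mat[OF elem_mat_carrier cX]]])
    finally have "elem_mat (2*n) i j l * X = ?A * (?B * (?C * (?D * X)))" .
    moreover have "?A * (?B * (?C * (?D * X))) \<in> perp_ESp n"
      using 3 by (intro elem_mat_1_j_mult_perp_ESp[OF n] elem_mat_i_1_mult_perp_ESp[OF n] X)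
    ultimately show ?thesis by simp
  qed
qed

lemma E_grp_mult_perp_ESp:
  assumes n: "n \<ge> 1" and A: "A \<in> E_grp (2*n)" and X: "X \<in> perp_ESp n"
  shows "A * X \<in> perp_ESp n"
proof (rule gen_subgroup_mult_stable[OF _ _ _ _ A[unfolded E_grp_def] X])
  show "perp_ESp n \<subseteq> carrier_mat (2*n) (2*n)" using perp_ESp_carrier[OF n] by blast
qed (use elem_mat_inverse elem_mat_inverse[of _ _ _ "- _"] elem_mat_mult_perp_ESp[OF n] in fastforce)+

theorem lemma4p3:
  fixes n :: nat and \<epsilon> :: "'a::comm_ring_1 mat"
  assumes "n \<ge> 2" and "\<epsilon> \<in> E_grp (2*n)"
  shows "\<exists>\<rho> \<in> E_phi (psi n :: 'a mat). one_perp \<rho> * \<epsilon> \<in> ESp n"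
proof -
  have n: "n \<ge> 1" using assms(1) by simp
  have "\<epsilon> \<in> perp_ESp n"
    using E_grp_mult_perp_ESp[OF n assms(2) one_mat_in_perp_ESp[OF n]] E_grp_carrier[OF assms(2)] by simp
  then obtain \<rho> s where \<rho>: "\<rho> \<in> E_phi (psi n :: 'a mat)" and s: "s \<in> ESp n" and \<epsilon>: "\<epsilon> = one_perp \<rho> * s"
    unfolding perp_ESp_def by blast
  obtain \<rho>' where \<rho>': "\<rho>' \<in> E_phi (psi n :: 'a mat)" and "\<rho>' * \<rho> = 1\<^sub>m (2*n-1)"
    using E_phi_psi_inverse[OF n \<rho>] by blast
  then have "one_perp \<rho>' * one_perp \<rho> = 1\<^sub>m (2*n)"
    using one_perp_mult[OF E_phi_psi_carrier[OF n \<rho>'] E_phi_psi_carrier[OF n \<rho>]] n by (simp add: one_perp_one)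
  then have "one_perp \<rho>' * \<epsilon> = s"
    unfolding \<epsilon> using one_perp_E_phi_psi_carrier[OF n \<rho>'] one_perp_E_phi_psi_carrier[OF n \<rho>] ESp_carrier[OF s]
    by (simp add: assoc_mult_mat[symmetric])
  with \<rho>' s show ?thesis by auto
qed

end
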